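(* Let $L$ be an IL-algebra in which every element is idempotent (i.e. $x\ast x=x$ for all $x\in L$), and let $F$ be a filter of $L$. Then $F$ is an implicative filter.
   Context: An IL-algebra is a structure $(L,\cup,\cap,\bot,\to,\ast,1)$ such that $(L,\cup,\cap,\bot)$ is a lattice with least element $\bot$, $(L,\ast,1)$ is a commutative monoid with unit $1$, and for all $x,y,z\in L$: $x\ast y\leq z$ iff $x\leq y\to z$. A filter of $L$ is a non-empty $F\subseteq L$ with $1\in F$, such that $x,y\in F$ implies $x\ast y\in F$ and $x\cap y\in F$, and $x\in F$, $x\leq y$ implies $y\in F$. An implicative filter of $L$ is a non-empty $F\subseteq L$ such that $1\in F$ and, for all $x,y,z\in L$, if $x\to(y\to z)\in F$ and $x\to y\in F$ then $x\to z\in F$. *)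

theory Defs
  imports Main
begin

definition il_le :: "('a \<Rightarrow> 'a \<Rightarrow> 'a) \<Rightarrow> 'a \<Rightarrow> 'a \<Rightarrow> bool" where
  "il_le meet x y \<longleftrightarrow> meet x y = x"

definition IL_algebra ::
  "'a set \<Rightarrow> ('a \<Rightarrow> 'a \<Rightarrow> 'a) \<Rightarrow> ('a \<Rightarrow> 'a \<Rightarrow> 'a) \<Rightarrow> 'a \<Rightarrow>
   ('a \<Rightarrow> 'a \<Rightarrow> 'a) \<Rightarrow> ('a \<Rightarrow> 'a \<Rightarrow> 'a) \<Rightarrow> 'a \<Rightarrow> bool" where
  "IL_algebra L join meet bt imp mul e \<longleftrightarrow>
     \<comment> \<open>closure\<close>
     (\<forall>x\<in>L. \<forall>y\<in>L. join x y \<in> L \<and> meet x y \<in> L \<and> imp x y \<in> L \<and> mul x y \<in> L)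
     \<and> bt \<in> L \<and> e \<in> L
     \<comment> \<open>lattice axioms\<close>
     \<and> (\<forall>x\<in>L. \<forall>y\<in>L. join x y = join y x \<and> meet x y = meet y x)
     \<and> (\<forall>x\<in>L. \<forall>y\<in>L. \<forall>z\<in>L. join (join x y) z = join x (join y z)
                            \<and> meet (meet x y) z = meet x (meet y z))
     \<and> (\<forall>x\<in>L. \<forall>y\<in>L. join x (meet x y) = x \<and> meet x (join x y) = x)
     \<comment> \<open>least element\<close>
     \<and> (\<forall>x\<in>L. il_le meet bt x)
     \<comment> \<open>commutative monoid\<close>
     \<and> (\<forall>x\<in>L. \<forall>y\<in>L. mul x y = mul y x)
     \<and> (\<forall>x\<in>L. \<forall>y\<in>L. \<forall>z\<in>L. mul (mul x y) z = mul x (mul y z))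
     \<and> (\<forall>x\<in>L. mul x e = x)
     \<comment> \<open>residuation\<close>
     \<and> (\<forall>x\<in>L. \<forall>y\<in>L. \<forall>z\<in>L. il_le meet (mul x y) z \<longleftrightarrow> il_le meet x (imp y z))"

definition IL_filter ::
  "'a set \<Rightarrow> ('a \<Rightarrow> 'a \<Rightarrow> 'a) \<Rightarrow> ('a \<Rightarrow> 'a \<Rightarrow> 'a) \<Rightarrow> 'a \<Rightarrow> 'a set \<Rightarrow> bool" where
  "IL_filter L meet mul e F \<longleftrightarrow>
     F \<noteq> {} \<and> F \<subseteq> L \<and> e \<in> F
     \<and> (\<forall>x\<in>F. \<forall>y\<in>F. mul x y \<in> F \<and> meet x y \<in> F)
     \<and> (\<forall>x\<in>F. \<forall>y\<in>L. il_le meet x y \<longrightarrow> y \<in> F)"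

definition IL_implicative_filter ::
  "'a set \<Rightarrow> ('a \<Rightarrow> 'a \<Rightarrow> 'a) \<Rightarrow> 'a \<Rightarrow> 'a set \<Rightarrow> bool" where
  "IL_implicative_filter L imp e F \<longleftrightarrow>
     F \<noteq> {} \<and> F \<subseteq> L \<and> e \<in> F
     \<and> (\<forall>x\<in>L. \<forall>y\<in>L. \<forall>z\<in>L.
          imp x (imp y z) \<in> F \<and> imp x y \<in> F \<longrightarrow> imp x z \<in> F)"

end

theory Submission
  imports Defs
begin

text \<open>Put a = x \<rightarrow> (y \<rightarrow> z) and b = x \<rightarrow> y. Since x is idempotent,
  (a * b) * x = (a * x) * (b * x), and by residuation a * x \<le> y \<rightarrow> z and
  b * x \<le> y, so (a * b) * x \<le> (y \<rightarrow> z) * y \<le> z, i.e. a * b \<le> x \<rightarrow> z.\<close>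

locale il_algebra =
  fixes L join meet bt imp mul e
  assumes IL: "IL_algebra L join meet bt imp mul e"
begin

abbreviation le :: "'a \<Rightarrow> 'a \<Rightarrow> bool" (infix "\<preceq>" 50)
  where "x \<preceq> y \<equiv> il_le meet x y"

lemma meet_closed: "x \<in> L \<Longrightarrow> y \<in> L \<Longrightarrow> meet x y \<in> L"
  and imp_closed [simp]: "x \<in> L \<Longrightarrow> y \<in> L \<Longrightarrow> imp x y \<in> L"
  and mul_closed [simp]: "x \<in> L \<Longrightarrow> y \<in> L \<Longrightarrow> mul x y \<in> L"
  using IL unfolding IL_algebra_def by blast+

lemma meet_assoc: "x \<in> L \<Longrightarrow> y \<in> L \<Longrightarrow> z \<in> L \<Longrightarrow> meet (meet x y) z = meet x (meet y z)"
  and join_meet_absorb: "x \<in> L \<Longrightarrow> y \<in> L \<Longrightarrow> join x (meet x y) = x"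
  and meet_join_absorb: "x \<in> L \<Longrightarrow> y \<in> L \<Longrightarrow> meet x (join x y) = x"
  and mul_commute: "x \<in> L \<Longrightarrow> y \<in> L \<Longrightarrow> mul x y = mul y x"
  and mul_assoc: "x \<in> L \<Longrightarrow> y \<in> L \<Longrightarrow> z \<in> L \<Longrightarrow> mul (mul x y) z = mul x (mul y z)"
  and residuation: "x \<in> L \<Longrightarrow> y \<in> L \<Longrightarrow> z \<in> L \<Longrightarrow> mul x y \<preceq> z \<longleftrightarrow> x \<preceq> imp y z"
  using IL unfolding IL_algebra_def by blast+

lemma le_refl: "x \<in> L \<Longrightarrow> x \<preceq> x"
  unfolding il_le_def
  by (metis join_meet_absorb meet_closed meet_join_absorb)

lemma le_trans: "x \<in> L \<Longrightarrow> y \<in> L \<Longrightarrow> z \<in> L \<Longrightarrow> x \<preceq> y \<Longrightarrow> y \<preceq> z \<Longrightarrow> x \<preceq> z"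
  unfolding il_le_def by (metis meet_assoc)

lemma mul_imp_le: "x \<in> L \<Longrightarrow> y \<in> L \<Longrightarrow> mul (imp x y) x \<preceq> y"
  by (simp add: residuation le_refl)

lemma mul_right_mono: "x \<in> L \<Longrightarrow> y \<in> L \<Longrightarrow> z \<in> L \<Longrightarrow> x \<preceq> y \<Longrightarrow> mul x z \<preceq> mul y z"
  by (meson imp_closed le_refl le_trans mul_closed residuation)

lemma mul_mono:
  assumes "x \<in> L" "x' \<in> L" "y \<in> L" "y' \<in> L" "x \<preceq> x'" "y \<preceq> y'"
  shows "mul x y \<preceq> mul x' y'"
proof -
  have "mul x y \<preceq> mul x' y"
    using assms by (simp add: mul_right_mono)
  moreover have "mul x' y \<preceq> mul x' y'"
    using assms mul_right_mono[of y y' x'] by (simp add: mul_commute)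
  ultimately show ?thesis
    using assms by (meson le_trans mul_closed)
qed

lemma mul_distrib_idem:
  assumes "a \<in> L" "b \<in> L" "x \<in> L" "mul x x = x"
  shows "mul (mul a b) x = mul (mul a x) (mul b x)"
proof -
  have "mul (mul a x) (mul b x) = mul a (mul (mul x b) x)"
    using assms by (simp add: mul_assoc)
  also have "\<dots> = mul a (mul b (mul x x))"
    using assms by (simp add: mul_assoc mul_commute[of x b])
  finally show ?thesis
    using assms by (simp add: mul_assoc)
qed

lemma mul_imp_imp_le_imp:
  assumes "x \<in> L" "y \<in> L" "z \<in> L" "mul x x = x"
  shows "mul (imp x (imp y z)) (imp x y) \<preceq> imp x z"
proof -
  let ?a = "imp x (imp y z)" and ?b = "imp x y"
  have "mul ?a x \<preceq> imp y z" and "mul ?b x \<preceq> y"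
    using assms by (simp_all add: residuation le_refl)
  then have "mul (mul ?a x) (mul ?b x) \<preceq> mul (imp y z) y"
    using assms by (simp add: mul_mono)
  then have "mul (mul ?a ?b) x \<preceq> z"
    using assms mul_imp_le[of y z] le_trans[of _ "mul (imp y z) y" z]
    by (simp add: mul_distrib_idem)
  then show ?thesis
    using assms by (simp add: residuation)
qed

end

theorem mainTheorem10:
  assumes "IL_algebra L join meet bt imp mul e"
    and "\<forall>x\<in>L. mul x x = x"
    and "IL_filter L meet mul e F"
  shows "IL_implicative_filter L imp e F"
proof -
  interpret il_algebra L join meet bt imp mul e
    using assms(1) by unfold_locales
  have F: "F \<noteq> {}" "F \<subseteq> L" "e \<in> F"
    and mul_in_F: "\<And>a b. a \<in> F \<Longrightarrow> b \<in> F \<Longrightarrow> mul a b \<in> F"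
    and up_closed: "\<And>a c. a \<in> F \<Longrightarrow> c \<in> L \<Longrightarrow> a \<preceq> c \<Longrightarrow> c \<in> F"
    using assms(3) unfolding IL_filter_def by blast+
  show ?thesis
    unfolding IL_implicative_filter_def
  proof (intro conjI ballI impI)
    fix x y z
    assume xyz: "x \<in> L" "y \<in> L" "z \<in> L" and "imp x (imp y z) \<in> F \<and> imp x y \<in> F"
    then have "mul (imp x (imp y z)) (imp x y) \<in> F"
      using mul_in_F by blast
    moreover have "mul (imp x (imp y z)) (imp x y) \<preceq> imp x z"
      using xyz assms(2) by (simp add: mul_imp_imp_le_imp)
    ultimately show "imp x z \<in> F"
      using xyz up_closed by simp
  qed (use F in auto)
qed

end
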